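(* Let $F$ be a field and $R$ a von Neumann regular ring which is an $F$-algebra. Let $M$ be a right $R$-module with $\dim_F M\le\aleph_0$ and let $I=\mathrm{Ann}_R(M)$. The following are equivalent: (1) $R/I$ is Artinian; (2) $M$ is $\Sigma$-$\aleph_0$-injective; (3) $M$ is $\aleph_0$-injective.
   Context: A right $R$-module $N$ is $\aleph_0$-injective if every $R$-homomorphism from a countably generated right ideal of $R$ into $N$ extends to $R$. $M$ is $\Sigma$-$\aleph_0$-injective if the direct sum $M^{(\Lambda)}$ of $\Lambda$ copies of $M$ is $\aleph_0$-injective for every index set $\Lambda$. $\mathrm{Ann}_R(M)=\{r\in R: Mr=0\}$; $M$ is an $F$-vector space via the algebra structure. *)

theory Defs
  imports "HOL-Algebra.QuotRing" "HOL-Library.Countable_Set" "HOL-Library.Function_Algebras"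
begin

definition ring_of_type :: "('r::ring_1) ring" where
  "ring_of_type = \<lparr>carrier = UNIV, mult = (*), one = 1, zero = 0, add = (+)\<rparr>"

definition right_ideal_of :: "('a, 'b) ring_scheme \<Rightarrow> 'a set \<Rightarrow> bool" where
  "right_ideal_of A K \<longleftrightarrow>
     K \<subseteq> carrier A \<and> \<zero>\<^bsub>A\<^esub> \<in> K \<and>
     (\<forall>x\<in>K. \<forall>y\<in>K. x \<oplus>\<^bsub>A\<^esub> y \<in> K) \<and>
     (\<forall>x\<in>K. \<ominus>\<^bsub>A\<^esub> x \<in> K) \<and>
     (\<forall>x\<in>K. \<forall>r\<in>carrier A. x \<otimes>\<^bsub>A\<^esub> r \<in> K)"

definition right_artinian :: "('a, 'b) ring_scheme \<Rightarrow> bool" where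
  "right_artinian A \<longleftrightarrow>
     (\<forall>K :: nat \<Rightarrow> 'a set.
        (\<forall>n. right_ideal_of A (K n) \<and> K (Suc n) \<subseteq> K n) \<longrightarrow>
        (\<exists>N. \<forall>n\<ge>N. K n = K N))"

definition right_ideal_gen :: "('r::ring_1) set \<Rightarrow> 'r set" where
  "right_ideal_gen G = \<Inter>{K. right_ideal_of (ring_of_type :: 'r ring) K \<and> G \<subseteq> K}"

definition countably_generated_right_ideal :: "('r::ring_1) set \<Rightarrow> bool" where
  "countably_generated_right_ideal J \<longleftrightarrow>
     right_ideal_of (ring_of_type :: 'r ring) J \<and>
     (\<exists>G. countable G \<and> G \<subseteq> J \<and> J = right_ideal_gen G)"

definition right_module :: "('m::ab_group_add) set \<Rightarrow> ('m \<Rightarrow> 'r::ring_1 \<Rightarrow> 'm) \<Rightarrow> bool" where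
  "right_module N act \<longleftrightarrow>
     0 \<in> N \<and> (\<forall>x\<in>N. \<forall>y\<in>N. x + y \<in> N) \<and> (\<forall>x\<in>N. - x \<in> N) \<and>
     (\<forall>x\<in>N. \<forall>r. act x r \<in> N) \<and>
     (\<forall>x\<in>N. \<forall>y\<in>N. \<forall>r. act (x + y) r = act x r + act y r) \<and>
     (\<forall>x\<in>N. \<forall>r s. act x (r + s) = act x r + act x s) \<and>
     (\<forall>x\<in>N. \<forall>r s. act x (r * s) = act (act x r) s) \<and>
     (\<forall>x\<in>N. act x 1 = x)"

definition rmod_hom ::
  "('a::ab_group_add) set \<Rightarrow> ('a \<Rightarrow> 'r::ring_1 \<Rightarrow> 'a) \<Rightarrow>
   ('b::ab_group_add) set \<Rightarrow> ('b \<Rightarrow> 'r \<Rightarrow> 'b) \<Rightarrow> ('a \<Rightarrow> 'b) \<Rightarrow> bool" where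
  "rmod_hom A actA B actB h \<longleftrightarrow>
     (\<forall>x\<in>A. h x \<in> B) \<and>
     (\<forall>x\<in>A. \<forall>y\<in>A. h (x + y) = h x + h y) \<and>
     (\<forall>x\<in>A. \<forall>r. h (actA x r) = actB (h x) r)"

definition aleph0_injective :: "('m::ab_group_add) set \<Rightarrow> ('m \<Rightarrow> 'r::ring_1 \<Rightarrow> 'm) \<Rightarrow> bool" where
  "aleph0_injective N act \<longleftrightarrow>
     (\<forall>(J :: 'r set) h.
        countably_generated_right_ideal J \<and> rmod_hom J (*) N act h \<longrightarrow>
        (\<exists>g. rmod_hom (UNIV :: 'r set) (*) N act g \<and> (\<forall>x\<in>J. g x = h x)))"

definition dsum :: "'i set \<Rightarrow> ('m::ab_group_add) set \<Rightarrow> ('i \<Rightarrow> 'm) set" where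
  "dsum \<Lambda> N = {f. (\<forall>i. f i \<in> N) \<and> (\<forall>i. i \<notin> \<Lambda> \<longrightarrow> f i = 0) \<and> finite {i. f i \<noteq> 0}}"

definition dsum_act :: "('m \<Rightarrow> 'r \<Rightarrow> 'm) \<Rightarrow> ('i \<Rightarrow> 'm) \<Rightarrow> 'r \<Rightarrow> ('i \<Rightarrow> 'm)" where
  "dsum_act act f r = (\<lambda>i. act (f i) r)"

definition Ann :: "('m::ab_group_add) set \<Rightarrow> ('m \<Rightarrow> 'r::ring_1 \<Rightarrow> 'm) \<Rightarrow> 'r set" where
  "Ann N act = {r. \<forall>m\<in>N. act m r = 0}"

definition F_algebra :: "('f::field \<Rightarrow> 'r::ring_1) \<Rightarrow> bool" where
  "F_algebra \<phi> \<longleftrightarrow>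
     \<phi> 1 = 1 \<and> (\<forall>a b. \<phi> (a + b) = \<phi> a + \<phi> b) \<and> (\<forall>a b. \<phi> (a * b) = \<phi> a * \<phi> b) \<and>
     (\<forall>c r. \<phi> c * r = r * \<phi> c)"

definition von_neumann_regular :: "'r::ring_1 itself \<Rightarrow> bool" where
  "von_neumann_regular _ \<longleftrightarrow> (\<forall>a::'r. \<exists>x. a = a * x * a)"

definition F_lin_indep :: "('f::field \<Rightarrow> 'r::ring_1) \<Rightarrow> ('m::ab_group_add \<Rightarrow> 'r \<Rightarrow> 'm) \<Rightarrow> 'm set \<Rightarrow> bool" where
  "F_lin_indep \<phi> act B \<longleftrightarrow>
     (\<forall>S c. finite S \<and> S \<subseteq> B \<and> (\<Sum>b\<in>S. act b (\<phi> (c b))) = 0 \<longrightarrow> (\<forall>b\<in>S. c b = 0))"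

definition F_span :: "('f::field \<Rightarrow> 'r::ring_1) \<Rightarrow> ('m::ab_group_add \<Rightarrow> 'r \<Rightarrow> 'm) \<Rightarrow> 'm set \<Rightarrow> 'm set" where
  "F_span \<phi> act B = {\<Sum>b\<in>S. act b (\<phi> (c b)) | S c. finite S \<and> S \<subseteq> B}"

definition F_dim_le_aleph0 :: "('f::field \<Rightarrow> 'r::ring_1) \<Rightarrow> 'm::ab_group_add set \<Rightarrow> ('m \<Rightarrow> 'r \<Rightarrow> 'm) \<Rightarrow> bool" where
  "F_dim_le_aleph0 \<phi> N act \<longleftrightarrow>
     (\<exists>B. B \<subseteq> N \<and> countable B \<and> F_lin_indep \<phi> act B \<and> F_span \<phi> act B = N)"

end

theory Submission
  imports Defs "HOL-Library.Set_Algebras" "HOL.Vector_Spaces"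
begin

text \<open>Let I = Ann M. Over a von Neumann regular ring, the descending chain condition on right
  ideals of R/I fails exactly when there is a strictly increasing sequence E 0 < E 1 < ... of
  idempotents modulo I. If there is none, every right ideal L is generated modulo I by an
  idempotent e (x \<equiv> e x mod I for x \<in> L). For a homomorphism h from a right ideal J into a module
  killed by I, write the generator of J + I as j + i with j \<in> J: regularity makes h vanish on
  J \<inter> I, so h is left multiplication by h j. Hence every M^(\<Lambda>) is \<aleph>0-injective.

  Conversely, given such a chain, the right ideal generated by the E n is countably generated
  and every element of it is absorbed by some E n, so \<aleph>0-injectivity lifts every compatible
  sequence (a m \<cdot> E n = a n for n \<le> m) to an element of M. Choose nonzero z k \<in> M (E (k+1) - E k);
  lifting the partial sums over S \<subseteq> \<nat> of the z k gives elements m S that pick out the z k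
  with k \<in> S. Along an almost disjoint family of continuum many subsets of \<nat> these elements are
  F-linearly independent, contradicting dim_F M \<le> \<aleph>0.\<close>

section \<open>Right ideals and quotients\<close>

lemma ring_of_type_simps [simp]:
  "carrier (ring_of_type::'r::ring_1 ring) = UNIV"
  "add (ring_of_type::'r::ring_1 ring) = (+)"
  "mult (ring_of_type::'r::ring_1 ring) = (*)"
  "one (ring_of_type::'r::ring_1 ring) = 1"
  "zero (ring_of_type::'r::ring_1 ring) = 0"
  by (simp_all add: ring_of_type_def)

lemma ring_ring_of_type: "ring (ring_of_type::'r::ring_1 ring)"
  by (intro ringI abelian_groupI monoidI)
    (auto simp: algebra_simps intro: exI[where x = "- _"])

lemma a_inv_ring_of_type [simp]: "\<ominus>\<^bsub>ring_of_type::'r::ring_1 ring\<^esub> x = - x"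
proof -
  interpret ring "ring_of_type::'r ring" by (rule ring_ring_of_type)
  show ?thesis by (rule add.inv_equality) auto
qed

lemma a_minus_ring_of_type [simp]: "x \<ominus>\<^bsub>ring_of_type::'r::ring_1 ring\<^esub> y = x - y"
  by (simp add: a_minus_def)

definition right_ideal :: "'r::ring_1 set \<Rightarrow> bool" where
  "right_ideal L \<longleftrightarrow>
     0 \<in> L \<and> (\<forall>x\<in>L. \<forall>y\<in>L. x + y \<in> L) \<and> (\<forall>x\<in>L. - x \<in> L) \<and> (\<forall>x\<in>L. \<forall>r. x * r \<in> L)"

lemma right_ideal_of_ring_of_type [simp]:
  "right_ideal_of (ring_of_type::'r::ring_1 ring) L \<longleftrightarrow> right_ideal L"
  by (simp add: right_ideal_of_def right_ideal_def)

lemma right_idealI: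
  assumes "0 \<in> L" "\<And>x y. x \<in> L \<Longrightarrow> y \<in> L \<Longrightarrow> x + y \<in> L" "\<And>x. x \<in> L \<Longrightarrow> - x \<in> L"
    "\<And>x r. x \<in> L \<Longrightarrow> x * r \<in> L"
  shows "right_ideal L"
  using assms by (simp add: right_ideal_def)

lemma right_ideal_zero: "right_ideal L \<Longrightarrow> 0 \<in> L"
  and right_ideal_add: "right_ideal L \<Longrightarrow> x \<in> L \<Longrightarrow> y \<in> L \<Longrightarrow> x + y \<in> L"
  and right_ideal_uminus: "right_ideal L \<Longrightarrow> x \<in> L \<Longrightarrow> - x \<in> L"
  and right_ideal_mult: "right_ideal L \<Longrightarrow> x \<in> L \<Longrightarrow> x * r \<in> L"
  by (simp_all add: right_ideal_def)

lemma right_ideal_diff: "right_ideal L \<Longrightarrow> x \<in> L \<Longrightarrow> y \<in> L \<Longrightarrow> x - y \<in> L"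
  by (metis diff_conv_add_uminus right_ideal_add right_ideal_uminus)

lemma right_ideal_principal: "right_ideal (a *o UNIV)"
proof (rule right_idealI)
  show "0 \<in> a *o UNIV"
    using set_times_intro2[of 0 UNIV a] by simp
  show "x + y \<in> a *o UNIV" if "x \<in> a *o UNIV" "y \<in> a *o UNIV" for x y
    using that set_times_intro2[of "_ + _" UNIV a] by (auto simp: elt_set_times_def distrib_left)
  show "- x \<in> a *o UNIV" if "x \<in> a *o UNIV" for x
    using that set_times_intro2[of "- _" UNIV a] by (auto simp: elt_set_times_def)
  show "x * r \<in> a *o UNIV" if "x \<in> a *o UNIV" for x r
    using that set_times_intro2[of "_ * r" UNIV a] by (auto simp: elt_set_times_def mult.assoc)
qed

lemma right_ideal_set_plus:
  assumes J: "right_ideal J" and K: "right_ideal K"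
  shows "right_ideal (J + K)"
proof (rule right_idealI)
  show "0 \<in> J + K"
    using J K by (metis add_0 right_ideal_zero set_plus_intro)
next
  fix x y assume "x \<in> J + K" "y \<in> J + K"
  then obtain a b c d where "a \<in> J" "b \<in> K" "c \<in> J" "d \<in> K" "x + y = (a + c) + (b + d)"
    by (auto elim!: set_plus_elim simp: add_ac)
  then show "x + y \<in> J + K"
    using J K by (metis right_ideal_add set_plus_intro)
next
  fix x assume "x \<in> J + K"
  then obtain a b where "a \<in> J" "b \<in> K" "- x = - a + - b"
    by (auto elim!: set_plus_elim)
  then show "- x \<in> J + K"
    using J K by (metis right_ideal_uminus set_plus_intro)
next
  fix x r assume "x \<in> J + K"
  then obtain a b where "a \<in> J" "b \<in> K" "x * r = a * r + b * r"
    by (auto elim!: set_plus_elim simp: distrib_right)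
  then show "x * r \<in> J + K"
    using J K by (metis right_ideal_mult set_plus_intro)
qed

lemma right_ideal_right_ideal_gen: "right_ideal (right_ideal_gen G)"
  and right_ideal_gen_superset: "G \<subseteq> right_ideal_gen G"
  and right_ideal_gen_least: "right_ideal K \<Longrightarrow> G \<subseteq> K \<Longrightarrow> right_ideal_gen G \<subseteq> K"
  unfolding right_ideal_gen_def right_ideal_of_ring_of_type right_ideal_def by blast+

lemma countably_generated_right_ideal_gen:
  "countable G \<Longrightarrow> countably_generated_right_ideal (right_ideal_gen G)"
  using right_ideal_right_ideal_gen right_ideal_gen_superset
  by (auto simp: countably_generated_right_ideal_def)

definition dcc_right_ideals_above :: "'r::ring_1 set \<Rightarrow> bool" where
  "dcc_right_ideals_above I \<longleftrightarrow>
     (\<forall>L::nat \<Rightarrow> 'r set. (\<forall>n. right_ideal (L n) \<and> I \<subseteq> L n \<and> L (Suc n) \<subseteq> L n) \<longrightarrow>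
        (\<exists>N. \<forall>n\<ge>N. L n = L N))"

lemma ring_of_type_coset_eq_iff:
  assumes "ideal I (ring_of_type::'r::ring_1 ring)"
  shows "I +>\<^bsub>ring_of_type\<^esub> x = I +>\<^bsub>ring_of_type\<^esub> y \<longleftrightarrow> x - y \<in> I"
proof -
  interpret ideal I "ring_of_type::'r ring" by (rule assms)
  have "x \<in> I +>\<^bsub>ring_of_type\<^esub> y \<longleftrightarrow> x - y \<in> I"
    using a_rcos_module_minus[OF ring_ring_of_type] by simp
  then show ?thesis
    using a_rcos_self[of x] a_repr_independence'[of x y] by auto
qed

lemma right_ideal_Quot_image:
  assumes I: "ideal I (ring_of_type::'r::ring_1 ring)" and L: "right_ideal L" "I \<subseteq> L"
  defines "p \<equiv> (+>\<^bsub>ring_of_type::'r ring\<^esub>) I"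
  shows "right_ideal_of (ring_of_type Quot I) (p ` L)" and "p -` p ` L = L"
proof -
  interpret ideal I "ring_of_type::'r ring" by (rule I)
  interpret p: ring_hom_ring "ring_of_type::'r ring" "ring_of_type Quot I" p
    unfolding p_def by (rule rcos_ring_hom_ring)
  have carrier: "carrier (ring_of_type Quot I) = range p"
    unfolding p_def FactRing_def A_RCOSETS_def' by auto
  show "p -` p ` L = L"
  proof (intro equalityI subsetI)
    fix r assume "r \<in> p -` p ` L"
    then obtain l where "l \<in> L" "r - l \<in> I"
      using ring_of_type_coset_eq_iff[OF I] unfolding p_def by (metis imageE vimageE)
    then show "r \<in> L"
      using L right_ideal_add[of L "r - l" l] by auto
  qed (rule vimageI2, rule imageI)
  show "right_ideal_of (ring_of_type Quot I) (p ` L)"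
    unfolding right_ideal_of_def
  proof (intro conjI ballI)
    show "p ` L \<subseteq> carrier (ring_of_type Quot I)"
      using carrier by blast
    have "\<zero>\<^bsub>ring_of_type Quot I\<^esub> = p 0"
      using p.hom_zero by simp
    then show "\<zero>\<^bsub>ring_of_type Quot I\<^esub> \<in> p ` L"
      using right_ideal_zero[OF L(1)] by simp
    fix x assume "x \<in> p ` L"
    then obtain a where a: "a \<in> L" "x = p a" by blast
    have "\<ominus>\<^bsub>ring_of_type Quot I\<^esub> x = p (- a)"
      using p.hom_a_inv[of a] a(2) by simp
    then show "\<ominus>\<^bsub>ring_of_type Quot I\<^esub> x \<in> p ` L"
      using right_ideal_uminus[OF L(1) a(1)] by simp
    show "x \<oplus>\<^bsub>ring_of_type Quot I\<^esub> y \<in> p ` L" if y: "y \<in> p ` L" for y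
    proof -
      obtain b where b: "b \<in> L" "y = p b" using y by blast
      have "x \<oplus>\<^bsub>ring_of_type Quot I\<^esub> y = p (a + b)"
        using p.hom_add[of a b] a(2) b(2) by simp
      then show ?thesis
        using right_ideal_add[OF L(1) a(1) b(1)] by simp
    qed
    show "x \<otimes>\<^bsub>ring_of_type Quot I\<^esub> y \<in> p ` L" if y: "y \<in> carrier (ring_of_type Quot I)" for y
    proof -
      obtain b where b: "y = p b" using y carrier by blast
      have "x \<otimes>\<^bsub>ring_of_type Quot I\<^esub> y = p (a * b)"
        using p.hom_mult[of a b] a(2) b by simp
      then show ?thesis
        using right_ideal_mult[OF L(1) a(1)] by simp
    qed
  qed
qed

lemma right_ideal_Quot_preimage:
  assumes I: "ideal I (ring_of_type::'r::ring_1 ring)" and K: "right_ideal_of (ring_of_type Quot I) K"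
  defines "p \<equiv> (+>\<^bsub>ring_of_type::'r ring\<^esub>) I"
  shows "right_ideal (p -` K)" and "I \<subseteq> p -` K" and "p ` p -` K = K"
proof -
  interpret ideal I "ring_of_type::'r ring" by (rule I)
  interpret p: ring_hom_ring "ring_of_type::'r ring" "ring_of_type Quot I" p
    unfolding p_def by (rule rcos_ring_hom_ring)
  have carrier: "carrier (ring_of_type Quot I) = range p"
    unfolding p_def FactRing_def A_RCOSETS_def' by auto
  have K_carrier: "K \<subseteq> carrier (ring_of_type Quot I)" and K_zero: "\<zero>\<^bsub>ring_of_type Quot I\<^esub> \<in> K"
    and K_add: "\<And>x y. x \<in> K \<Longrightarrow> y \<in> K \<Longrightarrow> x \<oplus>\<^bsub>ring_of_type Quot I\<^esub> y \<in> K"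
    and K_uminus: "\<And>x. x \<in> K \<Longrightarrow> \<ominus>\<^bsub>ring_of_type Quot I\<^esub> x \<in> K"
    and K_mult: "\<And>x r. x \<in> K \<Longrightarrow> r \<in> carrier (ring_of_type Quot I) \<Longrightarrow> x \<otimes>\<^bsub>ring_of_type Quot I\<^esub> r \<in> K"
    using K by (auto simp: right_ideal_of_def)
  show "right_ideal (p -` K)"
  proof (rule right_idealI)
    show "0 \<in> p -` K"
      using K_zero p.hom_zero by simp
    show "x + y \<in> p -` K" if "x \<in> p -` K" "y \<in> p -` K" for x y
      using that K_add p.hom_add[of x y] by simp
    show "- x \<in> p -` K" if "x \<in> p -` K" for x
      using that K_uminus p.hom_a_inv[of x] by simp
    show "x * r \<in> p -` K" if "x \<in> p -` K" for x r
      using that K_mult[of "p x" "p r"] p.hom_mult[of x r] carrier by simp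
  qed
  show "I \<subseteq> p -` K"
  proof
    fix i assume "i \<in> I"
    then have "p i = p 0"
      using ring_of_type_coset_eq_iff[OF I, of i 0] by (simp add: p_def)
    then show "i \<in> p -` K"
      using K_zero p.hom_zero by simp
  qed
  show "p ` p -` K = K"
    using K_carrier carrier by (simp add: image_vimage_eq) blast
qed

lemma right_artinian_Quot_iff:
  assumes I: "ideal I (ring_of_type::'r::ring_1 ring)"
  shows "right_artinian (ring_of_type Quot I) \<longleftrightarrow> dcc_right_ideals_above I"
proof -
  define p where "p = (+>\<^bsub>ring_of_type::'r ring\<^esub>) I"
  note image = right_ideal_Quot_image[OF I, folded p_def]
  note preimage = right_ideal_Quot_preimage[OF I, folded p_def]
  show ?thesis
    unfolding right_artinian_def dcc_right_ideals_above_def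
  proof (intro iffI allI impI)
    fix L :: "nat \<Rightarrow> 'r set"
    assume art: "\<forall>K. (\<forall>n. right_ideal_of (ring_of_type Quot I) (K n) \<and> K (Suc n) \<subseteq> K n) \<longrightarrow>
        (\<exists>N. \<forall>n\<ge>N. K n = K N)"
      and L: "\<forall>n. right_ideal (L n) \<and> I \<subseteq> L n \<and> L (Suc n) \<subseteq> L n"
    have "right_ideal_of (ring_of_type Quot I) (p ` L n) \<and> p ` L (Suc n) \<subseteq> p ` L n" for n
      using L image(1) by (simp add: image_mono)
    then obtain N where N: "\<forall>n\<ge>N. p ` L n = p ` L N"
      using mp[OF spec[OF art, of "\<lambda>n. p ` L n"]] by auto
    have "L n = L N" if "n \<ge> N" for n
    proof -
      have "L n = p -` p ` L n"
        using L image(2) by simp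
      also have "\<dots> = p -` p ` L N"
        by (metis N that)
      also have "\<dots> = L N"
        using L image(2) by simp
      finally show ?thesis .
    qed
    then show "\<exists>N. \<forall>n\<ge>N. L n = L N" by blast
  next
    fix K :: "nat \<Rightarrow> 'r set set"
    assume dcc: "\<forall>L. (\<forall>n. right_ideal (L n) \<and> I \<subseteq> L n \<and> L (Suc n) \<subseteq> L n) \<longrightarrow>
        (\<exists>N. \<forall>n\<ge>N. L n = L N)"
      and K: "\<forall>n. right_ideal_of (ring_of_type Quot I) (K n) \<and> K (Suc n) \<subseteq> K n"
    have "right_ideal (p -` K n) \<and> I \<subseteq> p -` K n \<and> p -` K (Suc n) \<subseteq> p -` K n" for n
      using K preimage(1,2) by auto
    then obtain N where N: "\<forall>n\<ge>N. p -` K n = p -` K N"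
      using mp[OF spec[OF dcc, of "\<lambda>n. p -` K n"]] by auto
    have "K n = K N" if "n \<ge> N" for n
    proof -
      have "K n = p ` p -` K n"
        using K preimage(3) by simp
      also have "\<dots> = p ` p -` K N"
        by (metis N that)
      also have "\<dots> = K N"
        using K preimage(3) by simp
      finally show ?thesis .
    qed
    then show "\<exists>N. \<forall>n\<ge>N. K n = K N" by blast
  qed
qed

section \<open>Right modules\<close>

lemma von_neumann_regularE:
  assumes "von_neumann_regular TYPE('r::ring_1)"
  obtains x where "(a::'r) = a * x * a"
  using assms by (auto simp: von_neumann_regular_def)

lemma F_algebra_add: "F_algebra \<phi> \<Longrightarrow> \<phi> (a + b) = \<phi> a + \<phi> b"
  and F_algebra_mult: "F_algebra \<phi> \<Longrightarrow> \<phi> (a * b) = \<phi> a * \<phi> b"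
  and F_algebra_one: "F_algebra \<phi> \<Longrightarrow> \<phi> 1 = 1"
  and F_algebra_central: "F_algebra \<phi> \<Longrightarrow> \<phi> c * r = r * \<phi> c"
  unfolding F_algebra_def by blast+

lemma F_algebra_zero: "F_algebra \<phi> \<Longrightarrow> \<phi> 0 = 0"
  using F_algebra_add[of \<phi> 0 0] by simp

lemma rmod_closed: "right_module M act \<Longrightarrow> x \<in> M \<Longrightarrow> act x r \<in> M"
  and rmod_one: "right_module M act \<Longrightarrow> x \<in> M \<Longrightarrow> act x 1 = x"
  and rmod_mult: "right_module M act \<Longrightarrow> x \<in> M \<Longrightarrow> act x (r * s) = act (act x r) s"
  and rmod_act_add: "right_module M act \<Longrightarrow> x \<in> M \<Longrightarrow> act x (r + s) = act x r + act x s"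
  and rmod_add_act: "right_module M act \<Longrightarrow> x \<in> M \<Longrightarrow> y \<in> M \<Longrightarrow> act (x + y) r = act x r + act y r"
  and rmod_zero_closed: "right_module M act \<Longrightarrow> 0 \<in> M"
  and rmod_add_closed: "right_module M act \<Longrightarrow> x \<in> M \<Longrightarrow> y \<in> M \<Longrightarrow> x + y \<in> M"
  unfolding right_module_def by blast+

lemma rmod_act_zero:
  assumes "right_module M act" "x \<in> M"
  shows "act x 0 = 0"
  using rmod_act_add[OF assms, of 0 0] by simp

lemma rmod_zero_act:
  assumes "right_module M act"
  shows "act 0 r = 0"
  using rmod_add_act[OF assms rmod_zero_closed[OF assms] rmod_zero_closed[OF assms], of r] by simp

lemma rmod_act_uminus:
  assumes "right_module M act" "x \<in> M"
  shows "act x (- r) = - act x r"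
  using rmod_act_add[OF assms, of r "- r"] rmod_act_zero[OF assms]
  by (simp add: eq_neg_iff_add_eq_0 add.commute)

lemma rmod_act_diff:
  assumes "right_module M act" "x \<in> M"
  shows "act x (r - s) = act x r - act x s"
  using rmod_act_add[OF assms, of r "- s"] rmod_act_uminus[OF assms, of s] by simp

lemma rmod_sum_closed:
  assumes mod: "right_module M act" and "\<And>i. i \<in> S \<Longrightarrow> f i \<in> M"
  shows "(\<Sum>i\<in>S. f i) \<in> M"
  using assms(2)
  by (induction S rule: infinite_finite_induct)
    (simp_all add: rmod_zero_closed[OF mod] rmod_add_closed[OF mod])

lemma rmod_sum_act:
  assumes mod: "right_module M act" and "\<And>i. i \<in> S \<Longrightarrow> f i \<in> M"
  shows "act (\<Sum>i\<in>S. f i) r = (\<Sum>i\<in>S. act (f i) r)"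
  using assms(2)
  by (induction S rule: infinite_finite_induct)
    (simp_all add: rmod_zero_act[OF mod] rmod_add_act[OF mod] rmod_sum_closed[OF mod])

lemma rmod_hom_act:
  "right_module M act \<Longrightarrow> x \<in> M \<Longrightarrow> rmod_hom (UNIV :: 'r::ring_1 set) (*) M act (act x)"
  by (simp add: rmod_hom_def rmod_closed rmod_act_add rmod_mult)

section \<open>Idempotent chains and the descending chain condition\<close>

lemma antimono_unstable_imp_strict_subseq:
  assumes "antimono L" and "\<not> (\<exists>N. \<forall>n\<ge>N. L n = L N)"
  obtains s where "\<And>k. L (s (Suc k)) \<subset> L (s k)"
proof -
  have later: "\<exists>m>k. L m \<noteq> L k" for k
  proof -
    obtain m where "m \<ge> k" "L m \<noteq> L k"
      using assms(2) by blast
    then show ?thesis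
      by (intro exI[of _ m]) (auto simp: le_less)
  qed
  have "\<exists>s. \<forall>k. True \<and> (s k < s (Suc k) \<and> L (s (Suc k)) \<noteq> L (s k))"
    by (rule dependent_nat_choice) (simp_all add: later)
  then obtain s where "\<And>k. s k < s (Suc k)" "\<And>k. L (s (Suc k)) \<noteq> L (s k)"
    by blast
  then have "L (s (Suc k)) \<subset> L (s k)" for k
    using antimonoD[OF assms(1), of "s k" "s (Suc k)"] by (simp add: less_imp_le psubset_eq)
  then show ?thesis
    by (rule that)
qed

locale two_sided_ideal =
  fixes I :: "'r::ring_1 set"
  assumes zero: "0 \<in> I"
    and add: "x \<in> I \<Longrightarrow> y \<in> I \<Longrightarrow> x + y \<in> I"
    and uminus: "x \<in> I \<Longrightarrow> - x \<in> I"
    and mult_right: "x \<in> I \<Longrightarrow> x * r \<in> I"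
    and mult_left: "x \<in> I \<Longrightarrow> r * x \<in> I"
begin

lemma diff: "x \<in> I \<Longrightarrow> y \<in> I \<Longrightarrow> x - y \<in> I"
  using add[of x "- y"] uminus[of y] by simp

lemma is_right_ideal: "right_ideal I"
  by (simp add: right_idealI zero add uminus mult_right)

lemma ideal_ring_of_type: "ideal I (ring_of_type::'r ring)"
proof (rule idealI[OF ring_ring_of_type])
  show "subgroup I (add_monoid (ring_of_type::'r ring))"
  proof (rule group.subgroupI)
    show "group (add_monoid (ring_of_type::'r ring))"
      using ring.is_abelian_group[OF ring_ring_of_type] abelian_group.a_group by blast
    show "inv\<^bsub>add_monoid (ring_of_type::'r ring)\<^esub> x \<in> I" if "x \<in> I" for x
      using that uminus a_inv_ring_of_type[of x, unfolded a_inv_def] by simp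
  qed (use zero add in auto)
qed (simp_all add: mult_left mult_right)

definition cong_mod :: "'r \<Rightarrow> 'r \<Rightarrow> bool" (infix "\<approx>" 50) where
  "x \<approx> y \<longleftrightarrow> x - y \<in> I"

lemma cong_mod_refl [simp, intro]: "x \<approx> x"
  by (simp add: cong_mod_def zero)

lemma cong_mod_sym: "x \<approx> y \<Longrightarrow> y \<approx> x"
  using uminus[of "x - y"] by (simp add: cong_mod_def)

lemma cong_mod_trans [trans]: "x \<approx> y \<Longrightarrow> y \<approx> z \<Longrightarrow> x \<approx> z"
  using add[of "x - y" "y - z"] by (simp add: cong_mod_def)

lemma cong_mod_add: "x \<approx> x' \<Longrightarrow> y \<approx> y' \<Longrightarrow> x + y \<approx> x' + y'"
  using add[of "x - x'" "y - y'"] by (simp add: cong_mod_def algebra_simps)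

lemma cong_mod_diff: "x \<approx> x' \<Longrightarrow> y \<approx> y' \<Longrightarrow> x - y \<approx> x' - y'"
  using diff[of "x - x'" "y - y'"] by (simp add: cong_mod_def algebra_simps)

lemma cong_mod_mult_left: "y \<approx> y' \<Longrightarrow> r * y \<approx> r * y'"
  using mult_left[of "y - y'" r] by (simp add: cong_mod_def algebra_simps)

lemma cong_mod_mult_right: "y \<approx> y' \<Longrightarrow> y * r \<approx> y' * r"
  using mult_right[of "y - y'" r] by (simp add: cong_mod_def algebra_simps)

lemma cong_mod_zero_iff: "x \<approx> 0 \<longleftrightarrow> x \<in> I"
  by (simp add: cong_mod_def)

text \<open>A strictly increasing sequence of idempotents of R/I, for the order e \<le> f \<longleftrightarrow> e f = f e = e.\<close>
definition idempotent_chain :: "(nat \<Rightarrow> 'r) \<Rightarrow> bool" where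
  "idempotent_chain E \<longleftrightarrow>
     (\<forall>n. E n * E n \<approx> E n \<and> E n * E (Suc n) \<approx> E n \<and> E (Suc n) * E n \<approx> E n \<and> \<not> E (Suc n) \<approx> E n)"

lemma idempotent_chain_le:
  assumes E: "idempotent_chain E" and "n \<le> m"
  shows "E n * E m \<approx> E n" and "E m * E n \<approx> E n"
  using \<open>n \<le> m\<close>
proof (induction m rule: dec_induct)
  case base
  show "E n * E n \<approx> E n" "E n * E n \<approx> E n"
    using E by (simp_all add: idempotent_chain_def)
next
  case (step m)
  have "E n * E (Suc m) \<approx> (E n * E m) * E (Suc m)"
    by (rule cong_mod_mult_right[OF cong_mod_sym[OF step.IH(1)]])
  also have "\<dots> = E n * (E m * E (Suc m))" by (simp add: mult.assoc)
  also have "\<dots> \<approx> E n * E m"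
    using E by (intro cong_mod_mult_left) (simp add: idempotent_chain_def)
  also have "\<dots> \<approx> E n" by (rule step.IH(1))
  finally show "E n * E (Suc m) \<approx> E n" .
  have "E (Suc m) * E n \<approx> E (Suc m) * (E m * E n)"
    by (rule cong_mod_mult_left[OF cong_mod_sym[OF step.IH(2)]])
  also have "\<dots> = (E (Suc m) * E m) * E n" by (simp add: mult.assoc)
  also have "\<dots> \<approx> E m * E n"
    using E by (intro cong_mod_mult_right) (simp add: idempotent_chain_def)
  also have "\<dots> \<approx> E n" by (rule step.IH(2))
  finally show "E (Suc m) * E n \<approx> E n" .
qed

lemma principal_plus_mem_iff: "x \<in> a *o UNIV + I \<longleftrightarrow> (\<exists>r. x \<approx> a * r)"
proof
  assume "x \<in> a *o UNIV + I"
  then obtain r i where "i \<in> I" "x = a * r + i"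
    by (auto simp: set_plus_def elt_set_times_def)
  then show "\<exists>r. x \<approx> a * r"
    by (intro exI[of _ r]) (simp add: cong_mod_def)
next
  assume "\<exists>r. x \<approx> a * r"
  then obtain r where "x - a * r \<in> I"
    by (auto simp: cong_mod_def)
  moreover have "x = a * r + (x - a * r)"
    by simp
  ultimately show "x \<in> a *o UNIV + I"
    by (metis set_plus_intro set_times_intro2 UNIV_I)
qed

lemma subset_principal_plus: "I \<subseteq> a *o UNIV + I"
proof
  fix x assume "x \<in> I"
  then have "x \<approx> a * 0"
    by (simp add: cong_mod_zero_iff)
  then show "x \<in> a *o UNIV + I"
    using principal_plus_mem_iff by blast
qed

lemma idempotent_chain_complement_ideals_mono:
  assumes E: "idempotent_chain E"
  shows "(1 - E (Suc n)) *o UNIV + I \<subseteq> (1 - E n) *o UNIV + I"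
proof
  fix x assume "x \<in> (1 - E (Suc n)) *o UNIV + I"
  then obtain r where "x \<approx> (1 - E (Suc n)) * r"
    using principal_plus_mem_iff by blast
  also have "(1 - E (Suc n)) * r = (1 - E n) * ((1 - E (Suc n)) * r) - (E n * E (Suc n) - E n) * r"
    by (simp add: algebra_simps)
  also have "\<dots> \<approx> (1 - E n) * ((1 - E (Suc n)) * r) - (E n - E n) * r"
    using E by (intro cong_mod_diff cong_mod_mult_right) (auto simp: idempotent_chain_def)
  finally show "x \<in> (1 - E n) *o UNIV + I"
    using principal_plus_mem_iff by auto
qed

lemma idempotent_chain_complement_ideals_neq:
  assumes E: "idempotent_chain E"
  shows "(1 - E (Suc n)) *o UNIV + I \<noteq> (1 - E n) *o UNIV + I"
proof
  assume "(1 - E (Suc n)) *o UNIV + I = (1 - E n) *o UNIV + I"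
  then obtain r where r: "1 - E n \<approx> (1 - E (Suc n)) * r"
    using principal_plus_mem_iff by (metis cong_mod_refl mult.right_neutral)
  \<comment> \<open>Since 1 - E(n+1) is idempotent modulo I, it is a left identity on its right ideal modulo I.\<close>
  have "(1 - E (Suc n)) * (1 - E n) \<approx> (1 - E (Suc n)) * ((1 - E (Suc n)) * r)"
    using r by (rule cong_mod_mult_left)
  also have "\<dots> = (1 - E (Suc n) - (E (Suc n) - E (Suc n) * E (Suc n))) * r"
    by (simp add: algebra_simps)
  also have "\<dots> \<approx> (1 - E (Suc n) - (E (Suc n) - E (Suc n))) * r"
    using E by (intro cong_mod_mult_right cong_mod_diff) (auto simp: idempotent_chain_def)
  also have "\<dots> \<approx> 1 - E n"
    using r by (simp add: cong_mod_sym)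
  finally have "(1 - E (Suc n)) * (1 - E n) \<approx> 1 - E n" .
  moreover have "(1 - E (Suc n)) * (1 - E n) \<approx> 1 - E (Suc n)"
  proof -
    have "(1 - E (Suc n)) * (1 - E n) = 1 - E n - E (Suc n) + E (Suc n) * E n"
      by (simp add: algebra_simps)
    also have "\<dots> \<approx> 1 - E n - E (Suc n) + E n"
      using E by (intro cong_mod_add) (auto simp: idempotent_chain_def)
    finally show ?thesis
      by simp
  qed
  ultimately have "1 - E (Suc n) \<approx> 1 - E n"
    by (meson cong_mod_sym cong_mod_trans)
  then have "E (Suc n) \<approx> E n"
    using cong_mod_diff[OF cong_mod_refl[of 1]] by fastforce
  then show False
    using E by (simp add: idempotent_chain_def)
qed

lemma dcc_imp_not_idempotent_chain:
  assumes dcc: "dcc_right_ideals_above I"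
  shows "\<not> idempotent_chain E"
proof
  assume E: "idempotent_chain E"
  define L where "L n = (1 - E n) *o UNIV + I" for n
  have "right_ideal (L n) \<and> I \<subseteq> L n \<and> L (Suc n) \<subseteq> L n" for n
    unfolding L_def using idempotent_chain_complement_ideals_mono[OF E] subset_principal_plus
    by (simp add: right_ideal_set_plus right_ideal_principal is_right_ideal)
  then obtain N where "\<forall>n\<ge>N. L n = L N"
    using dcc unfolding dcc_right_ideals_above_def by blast
  then have "L (Suc N) = L N"
    by (metis le_SucI order_refl)
  then show False
    using idempotent_chain_complement_ideals_neq[OF E] by (simp add: L_def)
qed

lemma idempotent_join_orthogonal:
  assumes ee: "e * e \<approx> e" and ff: "f * f = f" and ef: "e * f \<in> I" and f: "f \<notin> I"
  defines "g \<equiv> e + f - f * e"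
  shows "g * g \<approx> g" "e * g \<approx> e" "g * e \<approx> e" "\<not> g \<approx> e"
proof -
  define p where "p = e * e - e"
  have p: "p \<in> I"
    using ee by (simp add: p_def cong_mod_def)
  have ffe: "f * (f * e) = f * e"
    using ff by (metis mult.assoc)
  have "g * g - g = p + e * f - e * f * e - f * p - f * (e * f) + f * (e * f) * e"
    using ff ffe by (simp add: g_def p_def algebra_simps)
  then show "g * g \<approx> g"
    using p ef by (simp add: cong_mod_def diff add mult_right mult_left)
  have "e * g - e = p + e * f - e * f * e"
    by (simp add: g_def p_def algebra_simps)
  then show "e * g \<approx> e"
    using p ef by (simp add: cong_mod_def diff add mult_right)
  have "g * e - e = p - f * p"
    by (simp add: g_def p_def algebra_simps)
  then show "g * e \<approx> e"
    using p by (simp add: cong_mod_def diff mult_left)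
  show "\<not> g \<approx> e"
  proof
    assume "g \<approx> e"
    then have "f - f * e \<in> I"
      by (simp add: cong_mod_def g_def algebra_simps)
    moreover have "f = (f - f * e) * f + f * (e * f)"
      using ff by (simp add: algebra_simps)
    ultimately have "f \<in> I"
      using ef by (metis add mult_left mult_right)
    then show False
      using f by simp
  qed
qed

lemma exists_larger_idempotent:
  assumes vnr: "von_neumann_regular TYPE('r)" and L: "right_ideal L"
    and "e \<in> L" and ee: "e * e \<approx> e" and "a \<in> L" and a: "\<not> a \<approx> e * a"
  shows "\<exists>g\<in>L. g * g \<approx> g \<and> e * g \<approx> e \<and> g * e \<approx> e \<and> \<not> g \<approx> e"
proof -
  define b where "b = a - e * a"
  have "b \<in> L"
    unfolding b_def using L \<open>a \<in> L\<close> \<open>e \<in> L\<close> by (intro right_ideal_diff right_ideal_mult)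
  obtain y where y: "b = b * y * b"
    using vnr by (rule von_neumann_regularE)
  \<comment> \<open>f = b y is an exact idempotent with f b = b, and e b \<in> I because e is idempotent modulo I.\<close>
  define f where "f = b * y"
  have "f \<in> L"
    unfolding f_def using L \<open>b \<in> L\<close> by (rule right_ideal_mult)
  have ff: "f * f = f"
    unfolding f_def by (metis y mult.assoc)
  have "f \<notin> I"
  proof
    assume "f \<in> I"
    then have "f * b \<in> I"
      by (rule mult_right)
    then show False
      using a y by (simp add: f_def b_def cong_mod_def)
  qed
  have "e * f = - ((e * e - e) * a) * y"
    by (simp add: f_def b_def algebra_simps)
  then have "e * f \<in> I"
    using ee by (simp add: cong_mod_def mult_right uminus)
  moreover have "e + f - f * e \<in> L"
    using L \<open>e \<in> L\<close> \<open>f \<in> L\<close> by (intro right_ideal_diff right_ideal_add right_ideal_mult)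
  ultimately show ?thesis
    using idempotent_join_orthogonal[OF ee ff _ \<open>f \<notin> I\<close>] by blast
qed

lemma right_ideal_idempotent_generator:
  assumes vnr: "von_neumann_regular TYPE('r)" and no_chain: "\<And>E. \<not> idempotent_chain E"
    and L: "right_ideal L"
  shows "\<exists>e\<in>L. e * e \<approx> e \<and> (\<forall>x\<in>L. x \<approx> e * x)"
proof (rule ccontr)
  assume "\<not> ?thesis"
  then have step: "\<exists>g\<in>L. g * g \<approx> g \<and> e * g \<approx> e \<and> g * e \<approx> e \<and> \<not> g \<approx> e"
    if "e \<in> L" "e * e \<approx> e" for e
    using exists_larger_idempotent[OF vnr L that] that by blast
  have "\<exists>E. \<forall>n. (E n \<in> L \<and> E n * E n \<approx> E n) \<and>
      (E n * E (Suc n) \<approx> E n \<and> E (Suc n) * E n \<approx> E n \<and> \<not> E (Suc n) \<approx> E n)"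
  proof (rule dependent_nat_choice)
    show "\<exists>e. e \<in> L \<and> e * e \<approx> e"
      using right_ideal_zero[OF L] by (intro exI[of _ 0]) simp
  qed (use step in blast)
  then show False
    using no_chain unfolding idempotent_chain_def by blast
qed

lemma cong_mod_absorb_trans: "a * f \<approx> a \<Longrightarrow> f * g \<approx> f \<Longrightarrow> a * g \<approx> a"
  by (metis cong_mod_mult_left cong_mod_mult_right cong_mod_sym cong_mod_trans mult.assoc)

lemma idempotent_join:
  assumes af: "a * f \<approx> a" and fa: "f * a \<approx> f" and aa: "a * a \<approx> a"
    and gg: "g * g \<approx> g" and fg: "f * g \<approx> f" and gf: "\<not> g * f \<approx> g"
  defines "E \<equiv> g + a - g * a"
  shows "E * g \<approx> E" "g * E \<approx> g" "E * E \<approx> E" "a * E \<approx> a" "E * a \<approx> a" "\<not> E \<approx> a"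
proof -
  have ag: "a * g \<approx> a"
    using af fg by (rule cong_mod_absorb_trans)
  have Eg: "E * g \<approx> E"
  proof -
    have "E * g = g * g + a * g - g * (a * g)" by (simp add: E_def algebra_simps)
    also have "\<dots> \<approx> g + a - g * a"
      by (rule cong_mod_diff[OF cong_mod_add[OF gg ag] cong_mod_mult_left[OF ag]])
    finally show ?thesis unfolding E_def .
  qed
  show "E * g \<approx> E" by (rule Eg)
  have gE: "g * E \<approx> g"
  proof -
    have "g * E = g * g + g * a - (g * g) * a" by (simp add: E_def algebra_simps)
    also have "\<dots> \<approx> g + g * a - g * a"
      by (rule cong_mod_diff[OF cong_mod_add[OF gg cong_mod_refl] cong_mod_mult_right[OF gg]])
    finally show ?thesis by simp
  qed
  show "g * E \<approx> g" by (rule gE)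
  have Ea: "E * a \<approx> a"
  proof -
    have "E * a = g * a + a * a - g * (a * a)" by (simp add: E_def algebra_simps)
    also have "\<dots> \<approx> g * a + a - g * a"
      by (rule cong_mod_diff[OF cong_mod_add[OF cong_mod_refl aa] cong_mod_mult_left[OF aa]])
    finally show ?thesis by simp
  qed
  show "E * a \<approx> a" by (rule Ea)
  show "a * E \<approx> a"
  proof -
    have "a * E = a * g + a * a - (a * g) * a" by (simp add: E_def algebra_simps)
    also have "\<dots> \<approx> a + a - a * a"
      by (rule cong_mod_diff[OF cong_mod_add[OF ag aa] cong_mod_mult_right[OF ag]])
    also have "\<dots> \<approx> a + a - a" by (rule cong_mod_diff[OF cong_mod_refl aa])
    finally show ?thesis by simp
  qed
  show "E * E \<approx> E"
  proof -
    have "E * E = E * g + E * a - (E * g) * a" by (simp add: E_def algebra_simps)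
    also have "\<dots> \<approx> E + a - E * a"
      by (rule cong_mod_diff[OF cong_mod_add[OF Eg Ea] cong_mod_mult_right[OF Eg]])
    also have "\<dots> \<approx> E + a - a" by (rule cong_mod_diff[OF cong_mod_refl Ea])
    finally show ?thesis by simp
  qed
  show "\<not> E \<approx> a"
  proof
    assume "E \<approx> a"
    then have "g * a \<approx> g"
      using cong_mod_trans[OF cong_mod_mult_left[OF cong_mod_sym] gE] by blast
    then have "g * f \<approx> g"
      using af by (rule cong_mod_absorb_trans)
    then show False
      using gf by simp
  qed
qed

lemma idempotent_chain_of_joins:
  assumes ff: "\<And>k. f k * f k \<approx> f k" and "\<And>k. f k * f (Suc k) \<approx> f k"
    and "\<And>k. \<not> f (Suc k) * f k \<approx> f (Suc k)"
  shows "\<exists>E. idempotent_chain E"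
proof -
  have "\<exists>E. \<forall>k. (E k * f k \<approx> E k \<and> f k * E k \<approx> f k \<and> E k * E k \<approx> E k) \<and>
      (E k * E (Suc k) \<approx> E k \<and> E (Suc k) * E k \<approx> E k \<and> \<not> E (Suc k) \<approx> E k)"
  proof (rule dependent_nat_choice)
    show "\<exists>a. a * f 0 \<approx> a \<and> f 0 * a \<approx> f 0 \<and> a * a \<approx> a"
      using ff by blast
    fix a k assume "a * f k \<approx> a \<and> f k * a \<approx> f k \<and> a * a \<approx> a"
    then show "\<exists>E. (E * f (Suc k) \<approx> E \<and> f (Suc k) * E \<approx> f (Suc k) \<and> E * E \<approx> E) \<and>
        (a * E \<approx> a \<and> E * a \<approx> a \<and> \<not> E \<approx> a)"
      using idempotent_join[of a "f k" "f (Suc k)"] assms by blast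
  qed
  then show ?thesis
    unfolding idempotent_chain_def by blast
qed

lemma generators_of_strict_subset:
  assumes K': "right_ideal K'" "I \<subseteq> K'" "K' \<subset> K"
    and e: "e \<in> K" "\<And>x. x \<in> K \<Longrightarrow> x \<approx> e * x"
    and e': "e' \<in> K'" "\<And>x. x \<in> K' \<Longrightarrow> x \<approx> e' * x"
  shows "e * e' \<approx> e'" and "\<not> e' * e \<approx> e"
proof -
  show "e * e' \<approx> e'"
    using e(2) e'(1) K'(3) by (meson cong_mod_sym psubsetD)
  show "\<not> e' * e \<approx> e"
  proof
    assume h: "e' * e \<approx> e"
    have "K \<subseteq> K'"
    proof
      fix x assume "x \<in> K"
      then have "x \<approx> e' * (e * x)"
        using e(2) cong_mod_mult_right[OF cong_mod_sym[OF h]] by (metis cong_mod_trans mult.assoc)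
      then have "x - e' * (e * x) \<in> K'"
        using K'(2) by (auto simp: cong_mod_def)
      moreover have "e' * (e * x) \<in> K'"
        using K'(1) e'(1) by (simp add: mult.assoc[symmetric] right_ideal_mult)
      ultimately show "x \<in> K'"
        using right_ideal_add[OF K'(1)] by fastforce
    qed
    then show False
      using K'(3) by blast
  qed
qed

lemma not_idempotent_chain_imp_dcc:
  assumes vnr: "von_neumann_regular TYPE('r)" and no_chain: "\<And>E. \<not> idempotent_chain E"
  shows "dcc_right_ideals_above I"
  unfolding dcc_right_ideals_above_def
proof (intro allI impI)
  fix L :: "nat \<Rightarrow> 'r set"
  assume L: "\<forall>n. right_ideal (L n) \<and> I \<subseteq> L n \<and> L (Suc n) \<subseteq> L n"
  show "\<exists>N. \<forall>n\<ge>N. L n = L N"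
  proof (rule ccontr)
    assume unstable: "\<not> ?thesis"
    have "antimono L"
      using L by (simp add: antimono_iff_le_Suc)
    then obtain s where strict: "\<And>k. L (s (Suc k)) \<subset> L (s k)"
      using antimono_unstable_imp_strict_subseq unstable by blast
    have "\<forall>k. \<exists>e\<in>L (s k). e * e \<approx> e \<and> (\<forall>x\<in>L (s k). x \<approx> e * x)"
      using right_ideal_idempotent_generator[OF vnr no_chain] L by blast
    then obtain e where e: "\<And>k. e k \<in> L (s k)" "\<And>k. e k * e k \<approx> e k"
      "\<And>k x. x \<in> L (s k) \<Longrightarrow> x \<approx> e k * x"
      by metis
    note generators = generators_of_strict_subset[OF _ _ strict e(1,3) e(1,3)]
    \<comment> \<open>The complements 1 - e k form an ascending sequence of idempotents modulo I.\<close>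
    have "\<exists>E. idempotent_chain E"
    proof (rule idempotent_chain_of_joins[of "\<lambda>k. 1 - e k"])
      show "(1 - e k) * (1 - e k) \<approx> 1 - e k" for k
        using e(2) by (simp add: cong_mod_def algebra_simps)
      show "(1 - e k) * (1 - e (Suc k)) \<approx> 1 - e k" for k
        using generators(1) L by (simp add: cong_mod_def algebra_simps)
      show "\<not> (1 - e (Suc k)) * (1 - e k) \<approx> 1 - e (Suc k)" for k
        using generators(2) L by (simp add: cong_mod_def algebra_simps)
    qed
    then show False
      using no_chain by blast
  qed
qed

end

section \<open>Modules killed by I are \<aleph>0-injective when there is no idempotent chain\<close>

lemma two_sided_ideal_Ann:
  assumes mod: "right_module M act"
  shows "two_sided_ideal (Ann M act)"
proof
  show "0 \<in> Ann M act"
    by (simp add: Ann_def rmod_act_zero[OF mod])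
  show "x + y \<in> Ann M act" if "x \<in> Ann M act" "y \<in> Ann M act" for x y
    using that by (simp add: Ann_def rmod_act_add[OF mod])
  show "- x \<in> Ann M act" if "x \<in> Ann M act" for x
    using that by (simp add: Ann_def rmod_act_uminus[OF mod])
  show "x * r \<in> Ann M act" if "x \<in> Ann M act" for x r
    using that by (simp add: Ann_def rmod_mult[OF mod] rmod_zero_act[OF mod])
  show "r * x \<in> Ann M act" if "x \<in> Ann M act" for x r
    using that by (simp add: Ann_def rmod_mult[OF mod] rmod_closed[OF mod])
qed

context two_sided_ideal
begin

lemma act_cong_mod:
  assumes mod: "right_module N act" and ann: "I \<subseteq> Ann N act" and "x \<in> N" and "a \<approx> b"
  shows "act x a = act x b"
proof -
  have "act x (a - b) = 0"
    using assms by (auto simp: Ann_def cong_mod_def)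
  then show ?thesis
    by (simp add: rmod_act_diff[OF mod \<open>x \<in> N\<close>])
qed

lemma rmod_hom_vanishes_on_ideal:
  assumes vnr: "von_neumann_regular TYPE('r)" and ann: "I \<subseteq> Ann N act"
    and h: "rmod_hom J (*) N act h" and "z \<in> J" "z \<in> I"
  shows "h z = 0"
proof -
  obtain y where "z = z * y * z"
    using vnr by (rule von_neumann_regularE)
  then have "h z = h (z * (y * z))"
    by (simp add: mult.assoc)
  also have "\<dots> = act (h z) (y * z)"
    using h \<open>z \<in> J\<close> by (simp add: rmod_hom_def)
  also have "\<dots> = 0"
    using h ann mult_left[OF \<open>z \<in> I\<close>] \<open>z \<in> J\<close> by (auto simp: rmod_hom_def Ann_def)
  finally show ?thesis .
qed

lemma not_idempotent_chain_imp_aleph0_injective: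
  assumes vnr: "von_neumann_regular TYPE('r)" and no_chain: "\<And>E. \<not> idempotent_chain E"
    and mod: "right_module N act" and ann: "I \<subseteq> Ann N act"
  shows "aleph0_injective N act"
  unfolding aleph0_injective_def
proof (intro allI impI, elim conjE)
  fix J :: "'r set" and h
  assume "countably_generated_right_ideal J" and h: "rmod_hom J (*) N act h"
  then have J: "right_ideal J"
    by (simp add: countably_generated_right_ideal_def)
  obtain e where "e \<in> J + I" and e: "\<And>x. x \<in> J + I \<Longrightarrow> x \<approx> e * x"
    using right_ideal_idempotent_generator[OF vnr no_chain right_ideal_set_plus[OF J is_right_ideal]]
    by blast
  then obtain j i where "j \<in> J" "i \<in> I" "e = j + i"
    by (auto elim: set_plus_elim)
  \<comment> \<open>The J-component j of the generator e acts as a left identity on J modulo I \<inter> J.\<close>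
  have "h x = act (h j) x" if "x \<in> J" for x
  proof -
    have "x \<in> J + I"
      using that zero set_plus_intro[of x J 0 I] by simp
    then have "x - e * x \<in> I"
      using e by (simp add: cong_mod_def)
    then have "x - j * x \<in> I"
      using add[OF _ mult_right[OF \<open>i \<in> I\<close>], of "x - e * x" x] \<open>e = j + i\<close>
      by (simp add: algebra_simps)
    moreover have "j * x \<in> J" "x - j * x \<in> J"
      using J \<open>j \<in> J\<close> that by (simp_all add: right_ideal_mult right_ideal_diff)
    ultimately have "h x = h (x - j * x) + h (j * x)"
      using h by (metis diff_add_cancel rmod_hom_def)
    also have "\<dots> = h (j * x)"
      using rmod_hom_vanishes_on_ideal[OF vnr ann h \<open>x - j * x \<in> J\<close> \<open>x - j * x \<in> I\<close>] by simp
    also have "\<dots> = act (h j) x"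
      using h \<open>j \<in> J\<close> by (simp add: rmod_hom_def)
    finally show ?thesis .
  qed
  moreover have "h j \<in> N"
    using h \<open>j \<in> J\<close> by (simp add: rmod_hom_def)
  ultimately show "\<exists>g. rmod_hom UNIV (*) N act g \<and> (\<forall>x\<in>J. g x = h x)"
    using rmod_hom_act[OF mod] by auto
qed

end

lemma right_module_dsum:
  fixes M :: "'m::ab_group_add set" and act :: "'m \<Rightarrow> 'r::ring_1 \<Rightarrow> 'm" and \<Lambda> :: "'i set"
  assumes mod: "right_module M act"
  shows "right_module (dsum \<Lambda> M) (dsum_act act)"
proof -
  have "finite {i. f i + g i \<noteq> 0}" if "finite {i. f i \<noteq> 0}" "finite {i. g i \<noteq> 0}" for f g :: "'i \<Rightarrow> 'm"
    using that by (auto intro: finite_subset[of _ "{i. f i \<noteq> 0} \<union> {i. g i \<noteq> 0}"])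
  moreover have "finite {i. act (f i) r \<noteq> 0}" if "finite {i. f i \<noteq> 0}" for f :: "'i \<Rightarrow> 'm" and r
    using that by (rule finite_subset[rotated]) (auto simp: rmod_zero_act[OF mod])
  ultimately show ?thesis
    using mod rmod_zero_act[OF mod] unfolding right_module_def dsum_def dsum_act_def
    by (auto simp: fun_eq_iff)
qed

lemma Ann_subset_Ann_dsum: "Ann M act \<subseteq> Ann (dsum \<Lambda> M) (dsum_act act)"
  by (auto simp: Ann_def dsum_def dsum_act_def fun_eq_iff)

lemma aleph0_injective_dsum_singleton_imp:
  fixes act :: "'m::ab_group_add \<Rightarrow> 'r::ring_1 \<Rightarrow> 'm"
  assumes mod: "right_module M act" and inj: "aleph0_injective (dsum {j} M) (dsum_act act)"
  shows "aleph0_injective M act"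
  unfolding aleph0_injective_def
proof (intro allI impI, elim conjE)
  fix J :: "'r set" and h
  assume J: "countably_generated_right_ideal J" and h: "rmod_hom J (*) M act h"
  define h' where "h' x = (\<lambda>i. if i = j then h x else 0)" for x
  have "rmod_hom J (*) (dsum {j} M) (dsum_act act) h'"
    using h rmod_zero_closed[OF mod] rmod_zero_act[OF mod]
    unfolding rmod_hom_def h'_def dsum_def dsum_act_def by (auto simp: fun_eq_iff)
  then obtain g where g: "rmod_hom UNIV (*) (dsum {j} M) (dsum_act act) g" "\<forall>x\<in>J. g x = h' x"
    using inj J unfolding aleph0_injective_def by blast
  have "rmod_hom UNIV (*) M act (\<lambda>x. g x j)"
    using g(1) unfolding rmod_hom_def dsum_def dsum_act_def by auto
  moreover have "\<forall>x\<in>J. g x j = h x"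
    using g(2) by (simp add: h'_def)
  ultimately show "\<exists>g. rmod_hom UNIV (*) M act g \<and> (\<forall>x\<in>J. g x = h x)"
    by blast
qed

section \<open>F-independent subsets of M are countable\<close>

lemma sum_fun_apply: "(\<Sum>i\<in>S. f i) x = (\<Sum>i\<in>S. f i x)"
  by (induction S rule: infinite_finite_induct) auto

definition F_combination ::
  "('f::field \<Rightarrow> 'r::ring_1) \<Rightarrow> ('m::ab_group_add \<Rightarrow> 'r \<Rightarrow> 'm) \<Rightarrow> 'm set \<Rightarrow> ('m \<Rightarrow> 'f) \<Rightarrow> 'm" where
  "F_combination \<phi> act T k = (\<Sum>b\<in>T. act b (\<phi> (k b)))"

lemma F_combination_zero:
  assumes mod: "right_module M act" and alg: "F_algebra \<phi>" and "T \<subseteq> M"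
  shows "F_combination \<phi> act T (\<lambda>_. 0) = 0"
  using assms(3) by (simp add: F_combination_def F_algebra_zero[OF alg] rmod_act_zero[OF mod] subsetD)

lemma F_combination_add:
  assumes mod: "right_module M act" and alg: "F_algebra \<phi>" and "T \<subseteq> M"
  shows "F_combination \<phi> act T (\<lambda>x. k x + l x) = F_combination \<phi> act T k + F_combination \<phi> act T l"
  using assms(3)
  by (simp add: F_combination_def F_algebra_add[OF alg] rmod_act_add[OF mod] subsetD sum.distrib)

lemma F_combination_sum:
  assumes mod: "right_module M act" and alg: "F_algebra \<phi>" and "T \<subseteq> M"
  shows "F_combination \<phi> act T (\<Sum>i\<in>S. g i) = (\<Sum>i\<in>S. F_combination \<phi> act T (g i))"
  by (induction S rule: infinite_finite_induct)
    (simp_all add: F_combination_zero[OF assms] F_combination_add[OF assms])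

lemma F_combination_scale:
  assumes mod: "right_module M act" and alg: "F_algebra \<phi>" and T: "T \<subseteq> M"
  shows "act (F_combination \<phi> act T k) (\<phi> a) = F_combination \<phi> act T (\<lambda>x. a * k x)"
proof -
  have "act (F_combination \<phi> act T k) (\<phi> a) = (\<Sum>b\<in>T. act (act b (\<phi> (k b))) (\<phi> a))"
    unfolding F_combination_def using T by (intro rmod_sum_act[OF mod] rmod_closed[OF mod]) auto
  also have "\<dots> = (\<Sum>b\<in>T. act b (\<phi> (a * k b)))"
  proof (rule sum.cong)
    fix b assume "b \<in> T"
    have "\<phi> (k b) * \<phi> a = \<phi> (a * k b)"
      by (simp add: F_algebra_mult[OF alg, symmetric] mult.commute)
    then show "act (act b (\<phi> (k b))) (\<phi> a) = act b (\<phi> (a * k b))"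
      using T \<open>b \<in> T\<close> by (simp add: rmod_mult[OF mod, symmetric] subsetD)
  qed simp
  finally show ?thesis
    by (simp add: F_combination_def)
qed

lemma vector_space_fun: "Vector_Spaces.vector_space (\<lambda>(a::'f::field) (k::'a \<Rightarrow> 'f). \<lambda>x. a * k x)"
  by unfold_locales (auto simp: fun_eq_iff algebra_simps)

lemma finite_support_in_span_indicators:
  fixes k :: "'a \<Rightarrow> 'f::field"
  assumes "finite T" and "\<And>x. x \<notin> T \<Longrightarrow> k x = 0"
  shows "k \<in> module.span (\<lambda>a k x. a * k x) ((\<lambda>b x. if x = b then 1 else 0) ` T)"
proof -
  interpret vs: Vector_Spaces.vector_space "\<lambda>(a::'f) (k::'a \<Rightarrow> 'f). \<lambda>x. a * k x"
    by (rule vector_space_fun)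
  have "k = (\<Sum>b\<in>T. (\<lambda>x. k b * (if x = b then 1 else 0)))"
  proof
    fix x
    have "(\<Sum>b\<in>T. (\<lambda>x. k b * (if x = b then 1 else 0))) x = (\<Sum>b\<in>T. if x = b then k b else 0)"
      by (simp add: sum_fun_apply if_distrib cong: if_cong)
    also have "\<dots> = k x"
      using assms by auto
    finally show "k x = (\<Sum>b\<in>T. (\<lambda>x. k b * (if x = b then 1 else 0))) x" ..
  qed
  also have "\<dots> \<in> vs.span ((\<lambda>b x. if x = b then 1 else 0) ` T)"
    by (intro vs.span_sum vs.span_scale vs.span_base) auto
  finally show ?thesis .
qed

lemma F_lin_indep_finite_if_common_support:
  fixes \<phi> :: "'f::field \<Rightarrow> 'r::ring_1" and M :: "'m::ab_group_add set"
  assumes mod: "right_module M act" and alg: "F_algebra \<phi>" and T: "finite T" "T \<subseteq> M"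
    and ind: "F_lin_indep \<phi> act W" and repr: "\<And>w. w \<in> W \<Longrightarrow> \<exists>c. w = F_combination \<phi> act T c"
  shows "finite W"
proof -
  interpret vs: Vector_Spaces.vector_space "\<lambda>(a::'f) (k::'m \<Rightarrow> 'f). \<lambda>x. a * k x"
    by (rule vector_space_fun)
  note comb = F_combination_zero[OF mod alg T(2)] F_combination_sum[OF mod alg T(2)]
    F_combination_scale[OF mod alg T(2)]
  obtain c where c: "\<And>w. w \<in> W \<Longrightarrow> w = F_combination \<phi> act T (c w)"
    using bchoice[of W "\<lambda>w c. w = F_combination \<phi> act T c"] repr by blast
  \<comment> \<open>Coefficient vectors, truncated to T so that they live in a |T|-dimensional space.\<close>
  define \<kappa> where "\<kappa> w = (\<lambda>b. if b \<in> T then c w b else 0)" for w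
  have \<kappa>: "F_combination \<phi> act T (\<kappa> w) = w" if "w \<in> W" for w
    using c[OF that] by (simp add: F_combination_def \<kappa>_def)
  then have "inj_on \<kappa> W"
    by (rule inj_on_inverseI[of _ "F_combination \<phi> act T"])
  have "vs.independent (\<kappa> ` W)"
    unfolding vs.independent_explicit_module
  proof (intro allI impI)
    fix t u k
    assume t: "finite t" "t \<subseteq> \<kappa> ` W" and sum: "(\<Sum>v\<in>t. (\<lambda>x. u v * v x)) = 0" and "k \<in> t"
    define F where "F = F_combination \<phi> act T"
    have tW: "\<kappa> (F v) = v" "F v \<in> W" if "v \<in> t" for v
      using that t(2) \<kappa> by (auto simp: F_def)
    have "inj_on F t"
      using tW(1) by (rule inj_on_inverseI[of _ \<kappa>])
    have "(\<Sum>w\<in>F ` t. act w (\<phi> (u (\<kappa> w)))) = (\<Sum>v\<in>t. act (F v) (\<phi> (u v)))"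
      by (simp add: sum.reindex[OF \<open>inj_on F t\<close>] tW)
    also have "\<dots> = F (\<Sum>v\<in>t. (\<lambda>x. u v * v x))"
      by (simp add: F_def comb)
    also have "\<dots> = 0"
      by (simp add: sum F_def comb zero_fun_def)
    moreover have "F ` t \<subseteq> W"
      using tW(2) by blast
    ultimately have "u (\<kappa> (F k)) = 0"
      using ind[unfolded F_lin_indep_def, rule_format, of "F ` t" "\<lambda>w. u (\<kappa> w)"] t(1) \<open>k \<in> t\<close>
      by simp
    then show "u k = 0"
      using tW(1)[OF \<open>k \<in> t\<close>] by simp
  qed
  moreover have "\<kappa> ` W \<subseteq> vs.span ((\<lambda>b x. if x = b then 1 else 0) ` T)"
  proof
    fix k assume "k \<in> \<kappa> ` W"
    then have "k x = 0" if "x \<notin> T" for x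
      using that by (auto simp: \<kappa>_def)
    then show "k \<in> vs.span ((\<lambda>b x. if x = b then 1 else 0) ` T)"
      by (rule finite_support_in_span_indicators[OF T(1)])
  qed
  ultimately have "finite (\<kappa> ` W)"
    using vs.independent_span_bound T(1) by blast
  then show ?thesis
    using \<open>inj_on \<kappa> W\<close> finite_imageD by blast
qed

lemma F_lin_indep_countable:
  fixes \<phi> :: "'f::field \<Rightarrow> 'r::ring_1" and M :: "'m::ab_group_add set"
  assumes mod: "right_module M act" and alg: "F_algebra \<phi>" and dim: "F_dim_le_aleph0 \<phi> M act"
    and "V \<subseteq> M" and ind: "F_lin_indep \<phi> act V"
  shows "countable V"
proof -
  obtain B where B: "B \<subseteq> M" "countable B" "F_span \<phi> act B = M"
    using dim unfolding F_dim_le_aleph0_def by blast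
  have "\<forall>v\<in>V. \<exists>S. finite S \<and> S \<subseteq> B \<and> (\<exists>c. v = F_combination \<phi> act S c)"
    using \<open>V \<subseteq> M\<close> B(3) unfolding F_span_def F_combination_def by blast
  then obtain S where S: "\<And>v. v \<in> V \<Longrightarrow> finite (S v) \<and> S v \<subseteq> B \<and> (\<exists>c. v = F_combination \<phi> act (S v) c)"
    by metis
  \<comment> \<open>Group the elements of V by the finite subset of B used to write them.\<close>
  have "V = (\<Union>T\<in>S ` V. {v\<in>V. S v = T})"
    by blast
  moreover have "countable (S ` V)"
    using S by (intro countable_subset[OF _ countable_Collect_finite_subset[OF B(2)]]) auto
  moreover have "finite {v\<in>V. S v = T}" if "T \<in> S ` V" for T
  proof (rule F_lin_indep_finite_if_common_support[OF mod alg])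
    show "finite T" "T \<subseteq> M"
      using that S B(1) by auto
    show "F_lin_indep \<phi> act {v \<in> V. S v = T}"
      using ind by (auto simp: F_lin_indep_def)
  qed (use S in auto)
  ultimately show ?thesis
    by (metis (no_types, lifting) countable_UN countable_finite)
qed

section \<open>Uncountable independent families\<close>

lemma uncountable_UNIV_nat_set: "uncountable (UNIV :: nat set set)"
proof
  assume "countable (UNIV :: nat set set)"
  then have "range (from_nat_into (UNIV :: nat set set)) = Pow UNIV"
    by simp
  then show False
    using Cantors_theorem by blast
qed

text \<open>Codes of the finite initial segments of the characteristic sequence of A: distinct sets share
  only the codes of their common initial segments, so the family is almost disjoint.\<close>
definition prefix_codes :: "nat set \<Rightarrow> nat set" where
  "prefix_codes A = range (\<lambda>n. to_nat (map (\<lambda>i. i \<in> A) [0..<n]))"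

lemma infinite_prefix_codes: "infinite (prefix_codes A)"
proof -
  have "inj (\<lambda>n. to_nat (map (\<lambda>i. i \<in> A) [0..<n]))"
    by (rule injI) (metis diff_zero length_map length_upt to_nat_split)
  then show ?thesis
    unfolding prefix_codes_def by (rule range_inj_infinite)
qed

lemma finite_prefix_codes_Int:
  assumes "A \<noteq> B"
  shows "finite (prefix_codes A \<inter> prefix_codes B)"
proof -
  obtain i where i: "(i \<in> A) \<noteq> (i \<in> B)"
    using assms by blast
  have "prefix_codes A \<inter> prefix_codes B \<subseteq> (\<lambda>n. to_nat (map (\<lambda>i. i \<in> A) [0..<n])) ` {..i}"
  proof
    fix k assume "k \<in> prefix_codes A \<inter> prefix_codes B"
    then obtain n m where n: "k = to_nat (map (\<lambda>i. i \<in> A) [0..<n])"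
      and "k = to_nat (map (\<lambda>i. i \<in> B) [0..<m])"
      unfolding prefix_codes_def by blast
    then have eq: "map (\<lambda>i. i \<in> A) [0..<n] = map (\<lambda>i. i \<in> B) [0..<m]"
      by simp
    then have "n = m"
      by (metis diff_zero length_map length_upt)
    have "n \<le> i"
    proof (rule ccontr)
      assume "\<not> n \<le> i"
      then have "map (\<lambda>i. i \<in> A) [0..<n] ! i \<noteq> map (\<lambda>i. i \<in> B) [0..<m] ! i"
        using i \<open>n = m\<close> by simp
      then show False
        using eq by simp
    qed
    then show "k \<in> (\<lambda>n. to_nat (map (\<lambda>i. i \<in> A) [0..<n])) ` {..i}"
      using n by blast
  qed
  then show ?thesis
    by (rule finite_subset) simp
qed

lemma F_algebra_act_eq_zero:
  assumes mod: "right_module M act" and alg: "F_algebra \<phi>" and "x \<in> M" "x \<noteq> 0"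
    and "act x (\<phi> c) = 0"
  shows "c = 0"
proof (rule ccontr)
  assume "c \<noteq> 0"
  have "\<phi> c * \<phi> (inverse c) = 1"
    using \<open>c \<noteq> 0\<close> by (simp add: F_algebra_mult[OF alg, symmetric] F_algebra_one[OF alg])
  then have "x = act x (\<phi> c * \<phi> (inverse c))"
    using \<open>x \<in> M\<close> by (simp add: rmod_one[OF mod])
  also have "\<dots> = act (act x (\<phi> c)) (\<phi> (inverse c))"
    using \<open>x \<in> M\<close> by (rule rmod_mult[OF mod])
  also have "\<dots> = 0"
    using assms(5) by (simp add: rmod_zero_act[OF mod])
  finally show False
    using \<open>x \<noteq> 0\<close> by simp
qed

lemma inj_separating:
  assumes z: "\<And>k. z k \<noteq> 0" and sep: "\<And>S k. act (m S) (u k) = (if k \<in> S then z k else 0)"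
  shows "inj (\<lambda>A. m (prefix_codes A))"
proof (rule injI)
  fix A B assume eq: "m (prefix_codes A) = m (prefix_codes B)"
  show "A = B"
  proof (rule ccontr)
    assume "A \<noteq> B"
    then have "infinite (prefix_codes A - prefix_codes A \<inter> prefix_codes B)"
      by (intro Diff_infinite_finite finite_prefix_codes_Int infinite_prefix_codes)
    then obtain k where "k \<in> prefix_codes A" "k \<notin> prefix_codes B"
      using infinite_imp_nonempty by blast
    then show False
      using sep[of "prefix_codes A" k] sep[of "prefix_codes B" k] eq z by simp
  qed
qed

text \<open>Elements m S indexed by all S \<subseteq> \<nat> that detect membership in S through the u k need not
  be independent; restricted to the almost disjoint family of prefix codes they are.\<close>
lemma F_lin_indep_separating:
  fixes \<phi> :: "'f::field \<Rightarrow> 'r::ring_1" and M :: "'m::ab_group_add set"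
    and m :: "nat set \<Rightarrow> 'm" and z :: "nat \<Rightarrow> 'm" and u :: "nat \<Rightarrow> 'r"
  assumes mod: "right_module M act" and alg: "F_algebra \<phi>"
    and z: "\<And>k. z k \<in> M" "\<And>k. z k \<noteq> 0" and m: "\<And>S. m S \<in> M"
    and sep: "\<And>S k. act (m S) (u k) = (if k \<in> S then z k else 0)"
  shows "F_lin_indep \<phi> act (range (\<lambda>A. m (prefix_codes A)))"
  unfolding F_lin_indep_def
proof (intro allI impI ballI, elim conjE)
  fix T c b0
  assume T: "finite T" "T \<subseteq> range (\<lambda>A. m (prefix_codes A))"
    and sum: "(\<Sum>b\<in>T. act b (\<phi> (c b))) = 0" and "b0 \<in> T"
  have "\<forall>b\<in>T. \<exists>A. m (prefix_codes A) = b"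
    using T(2) by auto
  then obtain A where A: "\<And>b. b \<in> T \<Longrightarrow> m (prefix_codes (A b)) = b"
    by (auto dest!: bchoice)
  have TM: "b \<in> M" if "b \<in> T" for b
    using A[OF that] m[of "prefix_codes (A b)"] by simp
  \<comment> \<open>An index k that singles out b0 among the finitely many elements of T.\<close>
  define R where "R = (\<Union>b\<in>T - {b0}. prefix_codes (A b0) \<inter> prefix_codes (A b))"
  have "A b0 \<noteq> A b" if "b \<in> T - {b0}" for b
    using A[of b] A[OF \<open>b0 \<in> T\<close>] that by force
  then have "finite R"
    unfolding R_def using T(1) by (intro finite_UN_I finite_prefix_codes_Int) auto
  then have "infinite (prefix_codes (A b0) - R)"
    by (intro Diff_infinite_finite infinite_prefix_codes)
  then obtain k where k: "k \<in> prefix_codes (A b0)" "k \<notin> R"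
    using infinite_imp_nonempty by blast
  have bu: "act b (u k) = (if b = b0 then z k else 0)" if "b \<in> T" for b
    using sep[of "prefix_codes (A b)" k] A[OF that] k that by (auto simp: R_def)
  have "0 = act (\<Sum>b\<in>T. act b (\<phi> (c b))) (u k)"
    by (simp add: sum rmod_zero_act[OF mod])
  also have "\<dots> = (\<Sum>b\<in>T. act (act b (\<phi> (c b))) (u k))"
    using TM by (intro rmod_sum_act[OF mod] rmod_closed[OF mod])
  also have "\<dots> = (\<Sum>b\<in>T. if b = b0 then act (z k) (\<phi> (c b)) else 0)"
  proof (rule sum.cong)
    fix b assume "b \<in> T"
    have "act (act b (\<phi> (c b))) (u k) = act b (\<phi> (c b) * u k)"
      using TM[OF \<open>b \<in> T\<close>] by (rule rmod_mult[OF mod, symmetric])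
    also have "\<dots> = act (act b (u k)) (\<phi> (c b))"
      using TM[OF \<open>b \<in> T\<close>] by (simp add: F_algebra_central[OF alg] rmod_mult[OF mod])
    finally have "act (act b (\<phi> (c b))) (u k) = act (act b (u k)) (\<phi> (c b))" .
    then show "act (act b (\<phi> (c b))) (u k) = (if b = b0 then act (z k) (\<phi> (c b)) else 0)"
      using bu[OF \<open>b \<in> T\<close>] by (simp add: rmod_zero_act[OF mod])
  qed simp
  also have "\<dots> = act (z k) (\<phi> (c b0))"
    using T(1) \<open>b0 \<in> T\<close> by simp
  finally show "c b0 = 0"
    using F_algebra_act_eq_zero[OF mod alg z(1) z(2)] by simp
qed

lemma uncountable_F_lin_indep_if_separating:
  fixes \<phi> :: "'f::field \<Rightarrow> 'r::ring_1" and M :: "'m::ab_group_add set"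
    and m :: "nat set \<Rightarrow> 'm" and z :: "nat \<Rightarrow> 'm" and u :: "nat \<Rightarrow> 'r"
  assumes mod: "right_module M act" and alg: "F_algebra \<phi>"
    and z: "\<And>k. z k \<in> M" "\<And>k. z k \<noteq> 0" and m: "\<And>S. m S \<in> M"
    and sep: "\<And>S k. act (m S) (u k) = (if k \<in> S then z k else 0)"
  shows "\<exists>V\<subseteq>M. uncountable V \<and> F_lin_indep \<phi> act V"
proof (intro exI conjI)
  show "range (\<lambda>A. m (prefix_codes A)) \<subseteq> M"
    using m by auto
  show "uncountable (range (\<lambda>A. m (prefix_codes A)))"
    using inj_separating[where act = act and m = m and u = u, OF z(2) sep] uncountable_UNIV_nat_set countable_image_inj_on by blast
  show "F_lin_indep \<phi> act (range (\<lambda>A. m (prefix_codes A)))"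
    by (rule F_lin_indep_separating[OF mod alg z m sep])
qed

section \<open>An idempotent chain obstructs \<aleph>0-injectivity\<close>

context two_sided_ideal
begin

lemma idempotent_chain_diff_mult:
  assumes E: "idempotent_chain E"
  shows "(E (Suc k) - E k) * E n \<approx> (if k < n then E (Suc k) - E k else 0)"
proof (cases "k < n")
  case True
  have "(E (Suc k) - E k) * E n = E (Suc k) * E n - E k * E n"
    by (simp add: algebra_simps)
  also have "\<dots> \<approx> E (Suc k) - E k"
    using idempotent_chain_le[OF E, of "Suc k" n] idempotent_chain_le[OF E, of k n] True
    by (intro cong_mod_diff) auto
  finally show ?thesis
    using True by simp
next
  case False
  have "(E (Suc k) - E k) * E n = E (Suc k) * E n - E k * E n"
    by (simp add: algebra_simps)
  also have "\<dots> \<approx> E n - E n"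
    using idempotent_chain_le[OF E, of n "Suc k"] idempotent_chain_le[OF E, of n k] False
    by (intro cong_mod_diff) auto
  finally show ?thesis
    using False by simp
qed

lemma idempotent_chain_absorb_le:
  assumes E: "idempotent_chain E" and y: "y \<approx> E n * y" and "n \<le> p"
  shows "y \<approx> E p * y"
proof -
  have "E p * y \<approx> E p * (E n * y)"
    by (rule cong_mod_mult_left[OF y])
  also have "\<dots> = (E p * E n) * y"
    by (simp add: mult.assoc)
  also have "\<dots> \<approx> E n * y"
    using idempotent_chain_le(2)[OF E \<open>n \<le> p\<close>] by (rule cong_mod_mult_right)
  also have "\<dots> \<approx> y"
    by (rule cong_mod_sym[OF y])
  finally show ?thesis
    by (rule cong_mod_sym)
qed

lemma idempotent_chain_right_ideal_gen:
  assumes E: "idempotent_chain E" and "y \<in> right_ideal_gen (range E)"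
  shows "\<exists>n. y \<approx> E n * y"
proof -
  define S where "S = {y. \<exists>n. y \<approx> E n * y}"
  have "right_ideal S"
  proof (rule right_idealI)
    show "0 \<in> S"
      by (simp add: S_def)
    show "x + y \<in> S" if xy: "x \<in> S" "y \<in> S" for x y
    proof -
      obtain n m where "x \<approx> E n * x" "y \<approx> E m * y"
        using xy by (auto simp: S_def)
      then have "x \<approx> E (max n m) * x" "y \<approx> E (max n m) * y"
        by (auto intro: idempotent_chain_absorb_le[OF E])
      then show ?thesis
        unfolding S_def by (auto dest: cong_mod_add simp: distrib_left)
    qed
    show "- x \<in> S" if "x \<in> S" for x
      using that cong_mod_diff[OF cong_mod_refl[of 0]] by (fastforce simp: S_def)
    show "x * r \<in> S" if "x \<in> S" for x r
      using that cong_mod_mult_right by (fastforce simp: S_def mult.assoc)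
  qed
  moreover have "range E \<subseteq> S"
    using E by (auto simp: S_def idempotent_chain_def intro: cong_mod_sym)
  ultimately have "right_ideal_gen (range E) \<subseteq> S"
    by (rule right_ideal_gen_least)
  then show ?thesis
    using assms(2) unfolding S_def by blast
qed

lemma act_absorbed:
  assumes mod: "right_module M act" and ann: "I \<subseteq> Ann M act" and "x \<in> M" and "y \<approx> e * y"
  shows "act x y = act (act x e) y"
  using act_cong_mod[OF assms] by (simp add: rmod_mult[OF mod \<open>x \<in> M\<close>])

lemma idempotent_chain_compatible_hom:
  assumes E: "idempotent_chain E" and mod: "right_module M act" and ann: "I \<subseteq> Ann M act"
    and a: "\<And>n. a n \<in> M" and compat: "\<And>n m. n \<le> m \<Longrightarrow> act (a m) (E n) = a n"
  shows "\<exists>h. rmod_hom (right_ideal_gen (range E)) (*) M act h \<and> (\<forall>n. h (E n) = a n)"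
proof -
  define J where "J = right_ideal_gen (range E)"
  have J: "right_ideal J" "\<And>n. E n \<in> J"
    using right_ideal_gen_superset[of "range E"] by (auto simp: J_def right_ideal_right_ideal_gen)
  have absorbed: "\<exists>n. y \<approx> E n * y" if "y \<in> J" for y
    using idempotent_chain_right_ideal_gen[OF E] that by (simp add: J_def)
  define h where "h y = act (a (SOME n. y \<approx> E n * y)) y" for y
  have stable: "act (a m) y = act (a n) y" if "y \<approx> E n * y" "n \<le> m" for y n m
    using act_absorbed[OF mod ann a that(1)] compat[OF that(2)] by simp
  have h: "h y = act (a n) y" if "y \<in> J" "y \<approx> E n * y" for y n
  proof -
    define n0 where "n0 = (SOME n. y \<approx> E n * y)"
    have "y \<approx> E n0 * y"
      unfolding n0_def using absorbed[OF that(1)] by (rule someI_ex)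
    then have "h y = act (a (max n n0)) y"
      using stable[of y n0 "max n n0"] by (simp add: h_def n0_def)
    also have "\<dots> = act (a n) y"
      using stable[OF that(2), of "max n n0"] by simp
    finally show ?thesis .
  qed
  have "rmod_hom J (*) M act h"
    unfolding rmod_hom_def
  proof (intro conjI ballI allI)
    fix x assume "x \<in> J"
    then obtain n where n: "x \<approx> E n * x"
      using absorbed by blast
    show "h x \<in> M"
      using h[OF \<open>x \<in> J\<close> n] rmod_closed[OF mod a] by simp
    show "h (x * r) = act (h x) r" for r
    proof -
      have "x * r \<approx> E n * (x * r)"
        using cong_mod_mult_right[OF n, of r] by (simp add: mult.assoc)
      then have "h (x * r) = act (a n) (x * r)"
        by (rule h[OF right_ideal_mult[OF J(1) \<open>x \<in> J\<close>]])
      then show ?thesis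
        using h[OF \<open>x \<in> J\<close> n] by (simp add: rmod_mult[OF mod a])
    qed
    show "h (x + y) = h x + h y" if y: "y \<in> J" for y
    proof -
      obtain m where m: "y \<approx> E m * y"
        using absorbed[OF y] by blast
      have "x \<approx> E (max n m) * x" "y \<approx> E (max n m) * y"
        using idempotent_chain_absorb_le[OF E] n m by auto
      moreover from this have "x + y \<approx> E (max n m) * (x + y)"
        by (simp add: cong_mod_add distrib_left)
      ultimately show ?thesis
        using h[OF right_ideal_add[OF J(1) \<open>x \<in> J\<close> y]] h[OF \<open>x \<in> J\<close>] h[OF y]
        by (simp add: rmod_act_add[OF mod a])
    qed
  qed
  moreover have "h (E n) = a n" for n
    using h[OF J(2), of n n] compat[of n n] E
    by (simp add: idempotent_chain_def cong_mod_sym)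
  ultimately show ?thesis
    unfolding J_def by blast
qed

lemma idempotent_chain_lift:
  assumes E: "idempotent_chain E" and mod: "right_module M act" and ann: "I \<subseteq> Ann M act"
    and inj: "aleph0_injective M act" and a: "\<And>n. a n \<in> M"
    and compat: "\<And>n m. n \<le> m \<Longrightarrow> act (a m) (E n) = a n"
  shows "\<exists>x\<in>M. \<forall>n. act x (E n) = a n"
proof -
  obtain h where h: "rmod_hom (right_ideal_gen (range E)) (*) M act h" "\<And>n. h (E n) = a n"
    using idempotent_chain_compatible_hom[OF E mod ann a compat] by blast
  moreover have "countably_generated_right_ideal (right_ideal_gen (range E))"
    by (simp add: countably_generated_right_ideal_gen)
  ultimately obtain g where g: "rmod_hom UNIV (*) M act g" "\<And>x. x \<in> right_ideal_gen (range E) \<Longrightarrow> g x = h x"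
    using inj unfolding aleph0_injective_def by blast
  have "g (E n) = a n" for n
  proof -
    have "E n \<in> right_ideal_gen (range E)"
      using right_ideal_gen_superset by blast
    then show ?thesis
      using g(2) h(2) by simp
  qed
  have "act (g 1) (E n) = a n" for n
    using g(1) \<open>g (E n) = a n\<close> by (metis mult_1 rmod_hom_def UNIV_I)
  moreover have "g 1 \<in> M"
    using g(1) by (simp add: rmod_hom_def)
  ultimately show ?thesis
    by blast
qed

lemma idempotent_chain_witnesses:
  assumes E: "idempotent_chain E" and mod: "right_module M act" and I: "I = Ann M act"
  obtains z where "\<And>k. z k \<in> M" "\<And>k. z k \<noteq> 0"
    "\<And>k n. act (z k) (E n) = (if k < n then z k else 0)"
proof -
  have "E (Suc k) - E k \<notin> I" for k
    using E by (simp add: idempotent_chain_def cong_mod_def)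
  then have "\<forall>k. \<exists>w. w \<in> M \<and> act w (E (Suc k) - E k) \<noteq> 0"
    using I by (auto simp: Ann_def)
  then obtain w where w: "\<And>k. w k \<in> M" "\<And>k. act (w k) (E (Suc k) - E k) \<noteq> 0"
    by (auto dest!: choice)
  have "act (act (w k) (E (Suc k) - E k)) (E n) = (if k < n then act (w k) (E (Suc k) - E k) else 0)"
    for k n
  proof -
    have "act (act (w k) (E (Suc k) - E k)) (E n) = act (w k) ((E (Suc k) - E k) * E n)"
      using w(1) by (simp add: rmod_mult[OF mod])
    also have "\<dots> = act (w k) (if k < n then E (Suc k) - E k else 0)"
      using I by (intro act_cong_mod[OF mod _ w(1) idempotent_chain_diff_mult[OF E]]) simp
    finally show ?thesis
      using w(1) by (simp add: rmod_act_zero[OF mod])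
  qed
  moreover have "act (w k) (E (Suc k) - E k) \<in> M" for k
    using w(1) by (rule rmod_closed[OF mod])
  ultimately show ?thesis
    using that[of "\<lambda>k. act (w k) (E (Suc k) - E k)"] w(2) by blast
qed

lemma idempotent_chain_separating_family:
  assumes E: "idempotent_chain E" and mod: "right_module M act" and ann: "I \<subseteq> Ann M act"
    and inj: "aleph0_injective M act"
    and z: "\<And>k. z k \<in> M" and zE: "\<And>k n. act (z k) (E n) = (if k < n then z k else 0)"
  obtains m where "\<And>S. m S \<in> M" "\<And>S k. act (m S) (E (Suc k) - E k) = (if k \<in> S then z k else 0)"
proof -
  \<comment> \<open>m S is the lift of the partial sums over S of the z k, a compatible sequence.\<close>
  define p where "p S n = (\<Sum>k\<in>{..<n} \<inter> S. z k)" for S n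
  have p: "p S n \<in> M" for S n
    unfolding p_def using z by (rule rmod_sum_closed[OF mod])
  have p_compat: "act (p S m) (E n) = p S n" if "n \<le> m" for S n m
  proof -
    have "act (p S m) (E n) = (\<Sum>k\<in>{..<m} \<inter> S. if k < n then z k else 0)"
      unfolding p_def using z by (simp add: rmod_sum_act[OF mod] zE)
    also have "\<dots> = sum z {k \<in> {..<m} \<inter> S. k < n}"
      by (rule sum.inter_filter[symmetric]) simp
    also have "{k \<in> {..<m} \<inter> S. k < n} = {..<n} \<inter> S"
      using that by auto
    finally show ?thesis
      by (simp add: p_def)
  qed
  have "\<exists>x\<in>M. \<forall>n. act x (E n) = p S n" for S
    using p_compat by (rule idempotent_chain_lift[OF E mod ann inj p])
  then have "\<forall>S. \<exists>x. x \<in> M \<and> (\<forall>n. act x (E n) = p S n)"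
    by blast
  then obtain m where m: "\<And>S. m S \<in> M" "\<And>S n. act (m S) (E n) = p S n"
    by (auto dest!: choice)
  have "act (m S) (E (Suc k) - E k) = (if k \<in> S then z k else 0)" for S k
  proof -
    have "act (m S) (E (Suc k) - E k) = p S (Suc k) - p S k"
      by (simp add: rmod_act_diff[OF mod m(1)] m(2))
    also have "\<dots> = (if k \<in> S then z k else 0)"
      by (simp add: p_def lessThan_Suc)
    finally show ?thesis .
  qed
  then show ?thesis
    using that m(1) by blast
qed

lemma aleph0_injective_imp_not_idempotent_chain:
  fixes \<phi> :: "'f::field \<Rightarrow> 'r" and M :: "'m::ab_group_add set"
  assumes mod: "right_module M act" and alg: "F_algebra \<phi>" and dim: "F_dim_le_aleph0 \<phi> M act"
    and inj: "aleph0_injective M act" and I: "I = Ann M act"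
  shows "\<not> idempotent_chain E"
proof
  assume E: "idempotent_chain E"
  obtain z where z: "\<And>k. z k \<in> M" "\<And>k. z k \<noteq> 0"
    and zE: "\<And>k n. act (z k) (E n) = (if k < n then z k else 0)"
    using idempotent_chain_witnesses[OF E mod I] by blast
  obtain m where m: "\<And>S. m S \<in> M"
    and sep: "\<And>S k. act (m S) (E (Suc k) - E k) = (if k \<in> S then z k else 0)"
    using idempotent_chain_separating_family[OF E mod _ inj z(1) zE] I by blast
  obtain V where "V \<subseteq> M" "uncountable V" "F_lin_indep \<phi> act V"
    using uncountable_F_lin_indep_if_separating[OF mod alg z m sep] by blast
  then show False
    using F_lin_indep_countable[OF mod alg dim \<open>V \<subseteq> M\<close>] by simp
qed

end

theorem theorem3p5:
  fixes \<phi> :: "'f::field \<Rightarrow> 'r::ring_1"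
    and M :: "'m::ab_group_add set"
    and act :: "'m \<Rightarrow> 'r \<Rightarrow> 'm"
  assumes vnr: "von_neumann_regular TYPE('r)"
    and alg: "F_algebra \<phi>"
    and mod: "right_module M act"
    and dim: "F_dim_le_aleph0 \<phi> M act"
  shows "(right_artinian (ring_of_type Quot Ann M act)
            \<longleftrightarrow> (\<forall>\<Lambda> :: 'i set. aleph0_injective (dsum \<Lambda> M) (dsum_act act)))
       \<and> ((\<forall>\<Lambda> :: 'i set. aleph0_injective (dsum \<Lambda> M) (dsum_act act))
            \<longleftrightarrow> aleph0_injective M act)"
proof -
  interpret two_sided_ideal "Ann M act"
    by (rule two_sided_ideal_Ann[OF mod])
  have "right_artinian (ring_of_type Quot Ann M act) \<longleftrightarrow> dcc_right_ideals_above (Ann M act)"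
    by (rule right_artinian_Quot_iff[OF ideal_ring_of_type])
  also have "\<dots> \<longleftrightarrow> (\<forall>E. \<not> idempotent_chain E)"
    using dcc_imp_not_idempotent_chain not_idempotent_chain_imp_dcc[OF vnr] by blast
  finally have artinian: "right_artinian (ring_of_type Quot Ann M act) \<longleftrightarrow> (\<forall>E. \<not> idempotent_chain E)" .
  have "aleph0_injective (dsum \<Lambda> M) (dsum_act act)" if "\<forall>E. \<not> idempotent_chain E" for \<Lambda> :: "'i set"
    using that by (intro not_idempotent_chain_imp_aleph0_injective[OF vnr _ right_module_dsum[OF mod]
        Ann_subset_Ann_dsum]) simp
  moreover have "aleph0_injective M act" if "\<forall>\<Lambda> :: 'i set. aleph0_injective (dsum \<Lambda> M) (dsum_act act)"
    using that by (intro aleph0_injective_dsum_singleton_imp[OF mod, where j = "undefined :: 'i"]) simp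
  moreover have "\<forall>E. \<not> idempotent_chain E" if "aleph0_injective M act"
    using aleph0_injective_imp_not_idempotent_chain[OF mod alg dim that] by simp
  ultimately show ?thesis
    using artinian by blast
qed

end
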